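(* Let $f(\mathbf{x})=\mathbf{x}^{T}A\mathbf{x}+b^{T}\mathbf{x}+1$ with $A\in\mathbb{R}^{n\times n}$ symmetric and $b\in\mathbb{R}^n$. Then there exist $k\ge1$ and real diagonal $k\times k$ matrices $A_1,\dots,A_n$ with $f(\mathbf{x})=\det(I_k+x_1A_1+\dots+x_nA_n)$ if and only if $A-\frac14bb^{T}$ is negative semidefinite and $\operatorname{rank}(A-\frac14bb^{T})\le 1$. *)

theory Defs
  imports "HOL-Analysis.Analysis" "Jordan_Normal_Form.Determinant"
begin

definition neg_semidef :: "real^'n^'n \<Rightarrow> bool" where
  "neg_semidef M \<longleftrightarrow> (\<forall>x. x \<bullet> (M *v x) \<le> 0)"

definition pencil :: "nat \<Rightarrow> ('n::finite \<Rightarrow> real Matrix.mat) \<Rightarrow> real^'n \<Rightarrow> real Matrix.mat" where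
  "pencil k Ad x = Matrix.mat k k (\<lambda>(r,c). (if r = c then 1 else 0) + (\<Sum>i\<in>UNIV. x $ i * (Ad i $$ (r,c))))"

end

theory Submission
  imports Defs "HOL-Computational_Algebra.Polynomial"
begin

text \<open>
  The pencil is diagonal, so its determinant is a product of affine factors \<open>1 + w\<^sub>r \<bullet> x\<close>.
  Along a line \<open>t y\<close> in general position every nonzero \<open>w\<^sub>r\<close> contributes a root, while
  \<open>f(t y)\<close> has degree at most two; hence at most two factors are nonconstant and
  \<open>f(x) = (1 + p \<bullet> x)(1 + q \<bullet> x)\<close>. Comparing \<open>f(x)\<close> with \<open>f(-x)\<close> gives \<open>b = p + q\<close> and
  \<open>x\<^sup>T A x = (p \<bullet> x)(q \<bullet> x)\<close>, so the quadratic form of \<open>A - bb\<^sup>T/4\<close> is \<open>-(v \<bullet> x)\<^sup>2\<close> with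
  \<open>v = (p - q)/2\<close>. For symmetric matrices this says exactly \<open>A - bb\<^sup>T/4 = -vv\<^sup>T\<close>, i.e. negative
  semidefinite of rank at most one; conversely \<open>p, q = b/2 \<plusminus> v\<close> give a \<open>2 \<times> 2\<close> pencil.
\<close>

context
begin

no_notation Matrix.vec_index (infixl "$" 100)
no_notation Matrix.scalar_prod (infix "\<bullet>" 70)

definition vec_outer :: "real^'n \<Rightarrow> real^'n \<Rightarrow> real^'n^'n" where
  "vec_outer u v = (\<chi> i j. u$i * v$j)"

lemma transpose_diff: "transpose (A - B) = transpose A - transpose (B :: 'a::ab_group_add^'n^'m)"
  by (simp add: Finite_Cartesian_Product.transpose_def Finite_Cartesian_Product.vec_eq_iff)

lemma transpose_vec_outer: "transpose (vec_outer u v) = vec_outer v u"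
  by (simp add: vec_outer_def Finite_Cartesian_Product.transpose_def Finite_Cartesian_Product.vec_eq_iff mult.commute)

lemma quadratic_form_vec_outer: "x \<bullet> (vec_outer u v *v x) = (u \<bullet> x) * (v \<bullet> x)"
proof -
  have "vec_outer u v *v x = (v \<bullet> x) *\<^sub>R u"
    by (simp add: vec_outer_def Finite_Cartesian_Product.vec_eq_iff matrix_vector_mult_def inner_vec_def
        sum_distrib_left mult_ac)
  then show ?thesis by (simp add: inner_commute)
qed

lemma quadratic_form_diff_scaleR:
  fixes A B :: "real^'n^'n"
  shows "x \<bullet> ((A - c *\<^sub>R B) *v x) = x \<bullet> (A *v x) - c * (x \<bullet> (B *v x))"
  by (simp add: matrix_vector_mult_diff_rdistrib scaleR_matrix_vector_assoc[symmetric]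
      inner_diff_right)

lemma inner_axis_matrix_vector: "axis p 1 \<bullet> (S *v axis q 1) = S$p$q"
  by (simp add: matrix_vector_mult_basis inner_axis' column_def)

lemma symmetric_quadratic_form_eq_0:
  fixes S :: "real^'n^'n"
  assumes "transpose S = S" and "\<And>x. x \<bullet> (S *v x) = 0"
  shows "S = 0"
proof -
  have sym: "S$j$i = S$i$j" for i j
    using assms(1) by (metis Finite_Cartesian_Product.transpose_def vec_lambda_beta)
  have diag: "S$i$i = 0" for i
    using assms(2)[of "axis i 1"] by (simp add: inner_axis_matrix_vector)
  have "S$i$j = 0" for i j
  proof -
    have "(axis i 1 + axis j 1) \<bullet> (S *v (axis i 1 + axis j 1)) = S$i$i + S$i$j + S$j$i + S$j$j"
      by (simp add: matrix_vector_right_distrib inner_add_left inner_add_right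
          inner_axis_matrix_vector)
    then show ?thesis
      using assms(2) diag sym by (cases "i = j") simp_all
  qed
  then show ?thesis by (simp add: Finite_Cartesian_Product.vec_eq_iff)
qed

lemma symmetric_eq_if_quadratic_form_eq:
  fixes M N :: "real^'n^'n"
  assumes "transpose M = M" "transpose N = N" and "\<And>x. x \<bullet> (M *v x) = x \<bullet> (N *v x)"
  shows "M = N"
proof -
  have "M - N = 0"
    using assms by (intro symmetric_quadratic_form_eq_0)
      (simp_all add: transpose_diff matrix_vector_mult_diff_rdistrib inner_diff_right)
  then show ?thesis by simp
qed

lemma rank_vec_outer_le_1: "rank (vec_outer u v) \<le> 1"
proof -
  have "Finite_Cartesian_Product.rows (vec_outer u v) \<subseteq> span {v}"
  proof
    fix r assume "r \<in> Finite_Cartesian_Product.rows (vec_outer u v)"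
    then obtain i where "r = Finite_Cartesian_Product.row i (vec_outer u v)"
      by (auto simp: Finite_Cartesian_Product.rows_def)
    then have "r = u$i *\<^sub>R v"
      by (simp add: Finite_Cartesian_Product.row_def vec_outer_def Finite_Cartesian_Product.vec_eq_iff)
    then show "r \<in> span {v}" by (simp add: span_singleton) blast
  qed
  then have "dim (Finite_Cartesian_Product.rows (vec_outer u v)) \<le> dim (span {v})" by (rule dim_subset)
  also have "\<dots> \<le> 1" using dim_le_card[of "{v}" "span {v}"] by simp
  finally show ?thesis by (simp add: row_rank_def)
qed

lemma rank_le_1_imp_vec_outer:
  fixes M :: "real^'n^'n"
  assumes "rank M \<le> 1"
  obtains u v where "M = vec_outer u v"
proof -
  obtain B where B: "independent B" "Finite_Cartesian_Product.rows M \<subseteq> span B" "card B = dim (Finite_Cartesian_Product.rows M)"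
    using basis_exists by blast
  have "card B \<le> 1" using B(3) assms by (simp add: row_rank_def)
  with independent_imp_finite[OF B(1)] obtain v where "B \<subseteq> {v}"
    by (metis card_0_eq card_1_singletonE dual_order.refl less_one linorder_not_le
        order_antisym subset_insertI2)
  with B(2) have "Finite_Cartesian_Product.row i M \<in> span {v}" for i
    using span_mono unfolding Finite_Cartesian_Product.rows_def by blast
  then have "\<exists>c. Finite_Cartesian_Product.row i M = c *\<^sub>R v" for i
    by (force simp: span_singleton)
  then obtain c where "\<And>i. Finite_Cartesian_Product.row i M = c i *\<^sub>R v" by metis
  then have "M$i = c i *\<^sub>R v" for i
    by (metis Finite_Cartesian_Product.row_def vec_lambda_eta)
  then have "M = vec_outer (\<chi> i. c i) v"
    by (simp add: vec_outer_def Finite_Cartesian_Product.vec_eq_iff)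
  then show ?thesis by (rule that)
qed

lemma neg_semidef_rank_le_1_iff_vec_outer:
  fixes M :: "real^'n^'n"
  assumes sym: "transpose M = M"
  shows "neg_semidef M \<and> rank M \<le> 1 \<longleftrightarrow> (\<exists>v. M = vec_outer (- v) v)"
proof
  assume "neg_semidef M \<and> rank M \<le> 1"
  then have nsd: "neg_semidef M" and rank: "rank M \<le> 1" by auto
  obtain c u where Mcu: "M = vec_outer c u"
    using rank by (rule rank_le_1_imp_vec_outer)
  show "\<exists>v. M = vec_outer (- v) v"
  proof (cases "u = 0")
    case True
    then show ?thesis by (intro exI[of _ 0]) (simp add: Mcu vec_outer_def Finite_Cartesian_Product.vec_eq_iff)
  next
    case False
    then obtain j where j: "u$j \<noteq> 0" by (auto simp: Finite_Cartesian_Product.vec_eq_iff)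
    define l where "l = c$j / u$j"
    have "vec_outer u c = vec_outer c u"
      using sym by (simp add: Mcu transpose_vec_outer)
    then have "c$i * u$j = c$j * u$i" for i
      by (simp add: vec_outer_def Finite_Cartesian_Product.vec_eq_iff) (metis mult.commute)
    then have "c = l *\<^sub>R u"
      using j by (simp add: Finite_Cartesian_Product.vec_eq_iff l_def field_simps)
    then have Mlu: "M = l *\<^sub>R vec_outer u u"
      by (simp add: Mcu vec_outer_def Finite_Cartesian_Product.vec_eq_iff)
    have "l * (u \<bullet> u)^2 \<le> 0"
      using nsd[unfolded neg_semidef_def, rule_format, of u]
      by (simp add: Mlu scaleR_matrix_vector_assoc[symmetric] quadratic_form_vec_outer power2_eq_square)
    with False have "l \<le> 0" by (simp add: mult_le_0_iff)
    define s where "s = sqrt (- l)"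
    have "l = - (s * s)"
      using \<open>l \<le> 0\<close> by (simp add: s_def)
    then have "M = vec_outer (- (s *\<^sub>R u)) (s *\<^sub>R u)"
      by (simp add: Mlu vec_outer_def Finite_Cartesian_Product.vec_eq_iff)
    then show ?thesis by blast
  qed
next
  assume "\<exists>v. M = vec_outer (- v) v"
  then obtain v where "M = vec_outer (- v) v" by blast
  then show "neg_semidef M \<and> rank M \<le> 1"
    using rank_vec_outer_le_1[of "- v" v] by (simp add: neg_semidef_def quadratic_form_vec_outer)
qed

lemma neg_semidef_rank_le_1_iff:
  fixes M :: "real^'n^'n"
  assumes "transpose M = M"
  shows "neg_semidef M \<and> rank M \<le> 1 \<longleftrightarrow> (\<exists>v. \<forall>x. x \<bullet> (M *v x) = - ((v \<bullet> x)^2))"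
proof -
  have "transpose (vec_outer (- v) v) = vec_outer (- v) v" for v :: "real^'n"
    by (simp add: vec_outer_def Finite_Cartesian_Product.transpose_def Finite_Cartesian_Product.vec_eq_iff)
  then have "(\<forall>x. x \<bullet> (M *v x) = - ((v \<bullet> x)^2)) \<longleftrightarrow> M = vec_outer (- v) v" for v
    using symmetric_eq_if_quadratic_form_eq[OF assms, of "vec_outer (- v) v"]
    by (auto simp: quadratic_form_vec_outer power2_eq_square)
  then show ?thesis
    using neg_semidef_rank_le_1_iff_vec_outer[OF assms] by simp
qed

lemma quadratic_two_affine_factors_iff:
  fixes A :: "real^'n^'n" and b :: "real^'n"
  shows "(\<exists>p q. \<forall>x. x \<bullet> (A *v x) + b \<bullet> x + 1 = (1 + p \<bullet> x) * (1 + q \<bullet> x))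
     \<longleftrightarrow> (\<exists>v. \<forall>x. x \<bullet> ((A - (1/4) *\<^sub>R vec_outer b b) *v x) = - ((v \<bullet> x)^2))"
proof
  assume "\<exists>p q. \<forall>x. x \<bullet> (A *v x) + b \<bullet> x + 1 = (1 + p \<bullet> x) * (1 + q \<bullet> x)"
  then obtain p q where f: "\<And>x. x \<bullet> (A *v x) + b \<bullet> x + 1 = (1 + p \<bullet> x) * (1 + q \<bullet> x)"
    by blast
  have "A *v (- x) = - (A *v x)" for x
    using matrix_vector_mult_diff_distrib[of A 0 x] by simp
  then have lin: "b \<bullet> x = p \<bullet> x + q \<bullet> x" and quad: "x \<bullet> (A *v x) = (p \<bullet> x) * (q \<bullet> x)" for x
    using f[of x] f[of "- x"] by (simp_all add: algebra_simps)
  have "x \<bullet> ((A - (1/4) *\<^sub>R vec_outer b b) *v x) = - (((1/2) *\<^sub>R (p - q) \<bullet> x)^2)" for x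
  proof -
    have "x \<bullet> ((A - (1/4) *\<^sub>R vec_outer b b) *v x) = (p \<bullet> x) * (q \<bullet> x) - (1/4) * (p \<bullet> x + q \<bullet> x)^2"
      unfolding quadratic_form_diff_scaleR quadratic_form_vec_outer quad lin power2_eq_square ..
    then show ?thesis
      by (simp add: inner_diff_left power2_eq_square algebra_simps)
  qed
  then show "\<exists>v. \<forall>x. x \<bullet> ((A - (1/4) *\<^sub>R vec_outer b b) *v x) = - ((v \<bullet> x)^2)" by blast
next
  assume "\<exists>v. \<forall>x. x \<bullet> ((A - (1/4) *\<^sub>R vec_outer b b) *v x) = - ((v \<bullet> x)^2)"
  then obtain v where v: "\<And>x. x \<bullet> (A *v x) - (1/4) * (b \<bullet> x)^2 = - ((v \<bullet> x)^2)"
    by (auto simp: quadratic_form_diff_scaleR quadratic_form_vec_outer power2_eq_square)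
  have "x \<bullet> (A *v x) + b \<bullet> x + 1
        = (1 + ((1/2) *\<^sub>R b + v) \<bullet> x) * (1 + ((1/2) *\<^sub>R b - v) \<bullet> x)" for x
    using v[of x] by (simp add: inner_add_left inner_diff_left power2_eq_square algebra_simps)
  then show "\<exists>p q. \<forall>x. x \<bullet> (A *v x) + b \<bullet> x + 1 = (1 + p \<bullet> x) * (1 + q \<bullet> x)" by blast
qed

lemma card_nonconstant_factors_eq_degree:
  fixes c :: "nat \<Rightarrow> 'a::{idom,ring_char_0}"
  assumes "\<And>t. (\<Prod>r<k. 1 + t * c r) = poly P t"
  shows "card {r. r < k \<and> c r \<noteq> 0} = degree P"
proof -
  have "(\<Prod>r<k. [:1, c r:]) = P"
    using assms by (intro poly_eq_poly_eq_iff[THEN iffD1] ext) (simp add: poly_prod mult.commute)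
  moreover have "degree (\<Prod>r<k. [:1, c r:]) = (\<Sum>r<k. if c r = 0 then 0 else 1)"
    by (subst degree_prod_eq_sum_degree) (auto intro!: sum.cong)
  moreover have "(\<Sum>r<k. if c r = 0 then 0 else 1 :: nat) = card {r. r < k \<and> c r \<noteq> 0}"
    by (simp add: sum.If_cases) (rule arg_cong[where f = card], auto)
  ultimately show ?thesis by simp
qed

lemma exists_inner_nonzero:
  fixes W :: "'a::real_inner set"
  assumes "finite W" "0 \<notin> W"
  shows "\<exists>y. \<forall>w\<in>W. w \<bullet> y \<noteq> 0"
  using assms
proof (induction W rule: finite_induct)
  case empty then show ?case by auto
next
  case (insert w0 W)
  then obtain y where y: "\<forall>w\<in>W. w \<bullet> y \<noteq> 0" by auto
  let ?bad = "(\<lambda>w. - (w \<bullet> y) / (w \<bullet> w0)) ` insert w0 W"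
  obtain s where s: "s \<notin> ?bad"
    using ex_new_if_finite[OF infinite_UNIV_char_0, of ?bad] insert.hyps(1) by blast
  have "w \<bullet> (y + s *\<^sub>R w0) \<noteq> 0" if w: "w \<in> insert w0 W" for w
  proof (cases "w \<bullet> w0 = 0")
    case True
    then have "w \<in> W" using w insert.prems by auto
    then show ?thesis using y True by (simp add: inner_add_right)
  next
    case False
    have "s \<noteq> - (w \<bullet> y) / (w \<bullet> w0)" using s w by auto
    then show ?thesis using False by (simp add: inner_add_right field_simps)
  qed
  then show ?case by blast
qed

lemma card_nonconstant_affine_factors_le_2:
  fixes A :: "real^'n^'n" and w :: "nat \<Rightarrow> real^'n"
  assumes f: "\<And>x. x \<bullet> (A *v x) + b \<bullet> x + 1 = (\<Prod>r<k. 1 + w r \<bullet> x)"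
  shows "card {r. r < k \<and> w r \<noteq> 0} \<le> 2"
proof -
  have nonzero: "0 \<notin> w ` {r. r < k \<and> w r \<noteq> 0}" by auto
  obtain y where y: "\<forall>z \<in> w ` {r. r < k \<and> w r \<noteq> 0}. z \<bullet> y \<noteq> 0"
    using exists_inner_nonzero[OF _ nonzero] by auto
  have line: "(\<Prod>r<k. 1 + t * (w r \<bullet> y)) = poly [:1, b \<bullet> y, y \<bullet> (A *v y):] t" for t
    using f[of "t *\<^sub>R y"]
    by (simp add: matrix_vector_mult_scaleR power2_eq_square algebra_simps)
  have "card {r. r < k \<and> w r \<noteq> 0} = card {r. r < k \<and> w r \<bullet> y \<noteq> 0}"
    using y by (auto intro!: arg_cong[where f = card])
  also have "\<dots> = degree [:1, b \<bullet> y, y \<bullet> (A *v y):]"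
    using line by (rule card_nonconstant_factors_eq_degree)
  also have "\<dots> \<le> 2"
    using degree_pCons_le[of 1 "[:b \<bullet> y, y \<bullet> (A *v y):]"] degree_pCons_le[of "b \<bullet> y" "[:y \<bullet> (A *v y):]"]
    by simp
  finally show ?thesis .
qed

lemma prod_affine_factors_eq_two:
  fixes w :: "nat \<Rightarrow> 'a::real_inner"
  assumes "card {r. r < k \<and> w r \<noteq> 0} \<le> 2"
  obtains p q where "\<And>x. (\<Prod>r<k. 1 + w r \<bullet> x) = (1 + p \<bullet> x) * (1 + q \<bullet> x)"
proof -
  define S where "S = {r. r < k \<and> w r \<noteq> 0}"
  have prod_S: "(\<Prod>r<k. 1 + w r \<bullet> x) = (\<Prod>r\<in>S. 1 + w r \<bullet> x)" for x
    by (rule prod.mono_neutral_right) (auto simp: S_def)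
  have "finite S" "card S \<le> 2"
    using assms by (simp_all add: S_def)
  then consider "S = {}" | a where "S = {a}" | a c where "S = {a, c}" "a \<noteq> c"
    by (metis card_0_eq card_1_singleton_iff card_2_iff le_Suc_eq numeral_2_eq_2 One_nat_def le_zero_eq)
  then show ?thesis
  proof cases
    case 1 then show ?thesis using that[of 0 0] prod_S by simp
  next
    case (2 a) then show ?thesis using that[of "w a" 0] prod_S by simp
  next
    case (3 a c) then show ?thesis using that[of "w a" "w c"] prod_S by simp
  qed
qed

lemma det_pencil_diagonal:
  assumes "\<forall>i. Ad i \<in> carrier_mat k k \<and> diagonal_mat (Ad i)"
  shows "Determinant.det (pencil k Ad x) = (\<Prod>r<k. 1 + (\<chi> i. Ad i $$ (r, r)) \<bullet> x)"
proof -
  have "Ad i $$ (r, c) = 0" if "r < k" "c < k" "r \<noteq> c" for i r c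
    using assms that unfolding diagonal_mat_def carrier_mat_def by auto
  then have "upper_triangular (pencil k Ad x)"
    unfolding upper_triangular_def by (auto simp: pencil_def)
  then have "Determinant.det (pencil k Ad x) = (\<Prod>r = 0..<k. pencil k Ad x $$ (r, r))"
    by (subst det_upper_triangular[of _ k]) (auto simp: prod_list_diag_prod pencil_def)
  also have "\<dots> = (\<Prod>r<k. 1 + (\<chi> i. Ad i $$ (r, r)) \<bullet> x)"
    by (rule prod.cong) (auto simp: pencil_def inner_vec_def mult.commute)
  finally show ?thesis .
qed

lemma diagonal_pencil_iff_two_affine_factors:
  fixes f :: "real^'n \<Rightarrow> real" and A :: "real^'n^'n" and b :: "real^'n"
  defines "f x \<equiv> x \<bullet> (A *v x) + b \<bullet> x + 1"
  shows "(\<exists>k::nat. k \<ge> 1 \<and> (\<exists>Ad :: 'n \<Rightarrow> real Matrix.mat.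
            (\<forall>i. Ad i \<in> carrier_mat k k \<and> diagonal_mat (Ad i)) \<and>
            (\<forall>x. f x = Determinant.det (pencil k Ad x))))
     \<longleftrightarrow> (\<exists>p q. \<forall>x. f x = (1 + p \<bullet> x) * (1 + q \<bullet> x))"
proof
  assume "\<exists>k::nat. k \<ge> 1 \<and> (\<exists>Ad :: 'n \<Rightarrow> real Matrix.mat.
            (\<forall>i. Ad i \<in> carrier_mat k k \<and> diagonal_mat (Ad i)) \<and>
            (\<forall>x. f x = Determinant.det (pencil k Ad x)))"
  then obtain k and Ad :: "'n \<Rightarrow> real Matrix.mat"
    where Ad: "\<forall>i. Ad i \<in> carrier_mat k k \<and> diagonal_mat (Ad i)"
      and det: "\<And>x. f x = Determinant.det (pencil k Ad x)"
    by blast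
  define w where "w r = (\<chi> i. Ad i $$ (r, r))" for r
  have f_prod: "\<And>x. x \<bullet> (A *v x) + b \<bullet> x + 1 = (\<Prod>r<k. 1 + w r \<bullet> x)"
    using det det_pencil_diagonal[OF Ad] by (simp add: f_def w_def)
  obtain p q where "\<And>x. (\<Prod>r<k. 1 + w r \<bullet> x) = (1 + p \<bullet> x) * (1 + q \<bullet> x)"
    by (rule prod_affine_factors_eq_two[OF card_nonconstant_affine_factors_le_2[OF f_prod]]) blast
  then show "\<exists>p q. \<forall>x. f x = (1 + p \<bullet> x) * (1 + q \<bullet> x)"
    using f_prod by (auto simp: f_def)
next
  assume "\<exists>p q. \<forall>x. f x = (1 + p \<bullet> x) * (1 + q \<bullet> x)"
  then obtain p q where pq: "\<And>x. f x = (1 + p \<bullet> x) * (1 + q \<bullet> x)" by blast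
  define Ad where "Ad i = Matrix.mat 2 2 (\<lambda>(r, s). if r = s then (if r = 0 then p$i else q$i) else 0)"
    for i
  have Ad: "\<forall>i. Ad i \<in> carrier_mat 2 2 \<and> diagonal_mat (Ad i)"
    by (simp add: Ad_def diagonal_mat_def)
  have "(\<chi> i. Ad i $$ (0, 0)) = p" "(\<chi> i. Ad i $$ (1, 1)) = q"
    by (simp_all add: Ad_def Finite_Cartesian_Product.vec_eq_iff)
  then have "Determinant.det (pencil 2 Ad x) = (1 + p \<bullet> x) * (1 + q \<bullet> x)" for x
    unfolding det_pencil_diagonal[OF Ad] by (simp add: numeral_2_eq_2 lessThan_Suc)
  then show "\<exists>k::nat. k \<ge> 1 \<and> (\<exists>Ad :: 'n \<Rightarrow> real Matrix.mat.
            (\<forall>i. Ad i \<in> carrier_mat k k \<and> diagonal_mat (Ad i)) \<and>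
            (\<forall>x. f x = Determinant.det (pencil k Ad x)))"
    using Ad pq by (intro exI[of _ 2] conjI exI[of _ Ad]) auto
qed

end

theorem mainTheorem9:
  fixes A :: "real^'n^'n" and b :: "real^'n"
  assumes "Finite_Cartesian_Product.transpose A = A"
  shows "(\<exists>k::nat. k \<ge> 1 \<and> (\<exists>Ad :: 'n \<Rightarrow> real Matrix.mat.
            (\<forall>i. Ad i \<in> carrier_mat k k \<and> diagonal_mat (Ad i)) \<and>
            (\<forall>x::real^'n. x \<bullet> (A *v x) + b \<bullet> x + 1 = Determinant.det (pencil k Ad x))))
     \<longleftrightarrow> neg_semidef (A - (1/4) *\<^sub>R (\<chi> i j. b $ i * b $ j)) \<and>
         rank (A - (1/4) *\<^sub>R (\<chi> i j. b $ i * b $ j)) \<le> 1"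
proof -
  have "Finite_Cartesian_Product.transpose (A - (1/4) *\<^sub>R vec_outer b b) = A - (1/4) *\<^sub>R vec_outer b b"
    using assms by (simp add: transpose_diff transpose_scalar transpose_vec_outer)
  then have "neg_semidef (A - (1/4) *\<^sub>R vec_outer b b) \<and> rank (A - (1/4) *\<^sub>R vec_outer b b) \<le> 1
      \<longleftrightarrow> (\<exists>v. \<forall>x. x \<bullet> ((A - (1/4) *\<^sub>R vec_outer b b) *v x) = - ((v \<bullet> x)^2))"
    by (rule neg_semidef_rank_le_1_iff)
  then show ?thesis
    unfolding diagonal_pencil_iff_two_affine_factors quadratic_two_affine_factors_iff vec_outer_def
    by simp
qed

end
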